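(* Let $v:\mathbb{C}\rightarrow\mathbb{R}$ be a solution of $v_{z\bar z}+\frac12\sinh(2v)=0$, and let $\phi_t:(\mathbb{C},e^{2v}|dz|^2)\rightarrow\mathbb{S}^3$, $t\in\mathbb{R}$, be a $1$-parameter family of isometric minimal immersions with Hopf differentials $\Theta_{\phi_t}=\frac{i}{2}e^{it}dz\otimes dz$. Then for each $t$ the map \[ \Phi_t(z)=\bigl(\nu^+_{\phi_t}(z),\,2\,\mathrm{Im}(ze^{it/2})\bigr) \] is an isometric minimal immersion $(\mathbb{C},4\cosh^2v\,|dz|^2)\rightarrow\mathbb{S}^2_+\times\mathbb{R}$ with Hopf differential $e^{it}dz\otimes dz$; i.e., $\{\Phi_t\}$ is the $1$-parameter family of isometric minimal immersions of $(\mathbb{C},4\cosh^2v|dz|^2)$ into $\mathbb{S}^2\times\mathbb{R}$ with Hopf differentials $e^{it}dz\otimes dz$.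
   Context: For a conformal minimal immersion $\phi:\Sigma\to\mathbb{S}^3\subset\mathbb{R}^4$ with conformal parameter $z=x+iy$, $N$ is the unit normal in $\mathbb{S}^3$ with $\{\phi_x,\phi_y,\phi,N\}$ positively oriented in $\mathbb{R}^4$; its Hopf differential is $\Theta_\phi=\langle\phi_z,N_z\rangle dz\otimes dz$ ($\langle\cdot,\cdot\rangle$ complex-bilinear, $\partial_z=\frac12(\partial_x-i\partial_y)$). $\Lambda^2\mathbb{R}^4$ has the inner product $\langle v\wedge w,v'\wedge w'\rangle=\langle v,v'\rangle\langle w,w'\rangle-\langle v,w'\rangle\langle w,v'\rangle$; $\Lambda^2_+\mathbb{R}^4$ is the $+1$ eigenspace of the Hodge star, $\mathbb{S}^2_+$ its unit sphere (an isometric copy of $\mathbb{S}^2$), and $\nu^+_\phi(p)=\frac1{\sqrt2}(e_1\wedge e_2+\phi(p)\wedge N_p)$ for an oriented orthonormal basis $\{e_1,e_2\}$ of $d\phi(T_p\Sigma)$. For a conformal immersion $\Phi=(\Phi_1,\Phi_2)$ into $\mathbb{S}^2\times\mathbb{R}$, its Hopf differential is $\langle(\Phi_1)_z,(\Phi_1)_z\rangle dz\otimes dz$. *)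

theory Defs
  imports "HOL-Analysis.Analysis"
begin

definition dx :: "(complex \<Rightarrow> 'a::real_normed_vector) \<Rightarrow> complex \<Rightarrow> 'a" where
  "dx f z = frechet_derivative f (at z) 1"

definition dy :: "(complex \<Rightarrow> 'a::real_normed_vector) \<Rightarrow> complex \<Rightarrow> 'a" where
  "dy f z = frechet_derivative f (at z) \<i>"

text \<open>Euclidean Laplacian f_xx + f_yy (note f_{z zbar} = lap f / 4).\<close>
definition lap :: "(complex \<Rightarrow> 'a::real_normed_vector) \<Rightarrow> complex \<Rightarrow> 'a" where
  "lap f z = dx (dx f) z + dy (dy f) z"

inductive_set partials :: "(complex \<Rightarrow> 'a::real_normed_vector) \<Rightarrow> (complex \<Rightarrow> 'a) set"
  for f where
  base: "f \<in> partials f"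
| stepx: "g \<in> partials f \<Longrightarrow> dx g \<in> partials f"
| stepy: "g \<in> partials f \<Longrightarrow> dy g \<in> partials f"

definition smooth :: "(complex \<Rightarrow> 'a::real_normed_vector) \<Rightarrow> bool" where
  "smooth f \<longleftrightarrow> (\<forall>g\<in>partials f. \<forall>z. g differentiable (at z))"

text \<open>Complexified derivative d/dz = (d/dx - i d/dy)/2 of a real-vector-valued map,
  represented as (real part, imaginary part).\<close>
definition dz :: "(complex \<Rightarrow> 'a::real_normed_vector) \<Rightarrow> complex \<Rightarrow> 'a \<times> 'a" where
  "dz f z = (scaleR (1/2) (dx f z), scaleR (-1/2) (dy f z))"

text \<open>Complex-bilinear extension of the real inner product: <a+ib, c+id>.\<close>
definition cbil :: "'a::real_inner \<times> 'a \<Rightarrow> 'a \<times> 'a \<Rightarrow> complex" where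
  "cbil p q = Complex (fst p \<bullet> fst q - snd p \<bullet> snd q) (fst p \<bullet> snd q + snd p \<bullet> fst q)"

text \<open>f is an isometric immersion of (C, lam |dz|^2).\<close>
definition isometric_immersion :: "(complex \<Rightarrow> 'a::real_inner) \<Rightarrow> (complex \<Rightarrow> real) \<Rightarrow> bool" where
  "isometric_immersion f lam \<longleftrightarrow> smooth f \<and>
     (\<forall>z. lam z > 0 \<and> dx f z \<bullet> dx f z = lam z \<and> dy f z \<bullet> dy f z = lam z \<and> dx f z \<bullet> dy f z = 0)"

text \<open>Isometric minimal immersion into a submanifold M of a Euclidean space whose tangent space
  at p is Tan p: f maps into M and its mean curvature vector (the component of the Laplacian
  tangent to M and normal to the surface) vanishes.\<close>
definition isometric_minimal_immersion ::
  "'a::real_inner set \<Rightarrow> ('a \<Rightarrow> 'a set) \<Rightarrow> (complex \<Rightarrow> 'a) \<Rightarrow> (complex \<Rightarrow> real) \<Rightarrow> bool" where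
  "isometric_minimal_immersion M Tan f lam \<longleftrightarrow> isometric_immersion f lam \<and> (\<forall>z. f z \<in> M) \<and>
     (\<forall>z u. u \<in> Tan (f z) \<and> u \<bullet> dx f z = 0 \<and> u \<bullet> dy f z = 0 \<longrightarrow> lap f z \<bullet> u = 0)"

definition S3 :: "(real^4) set" where "S3 = {p. norm p = 1}"

definition TanS3 :: "real^4 \<Rightarrow> (real^4) set" where "TanS3 p = {u. u \<bullet> p = 0}"

definition normal_S3 :: "(complex \<Rightarrow> real^4) \<Rightarrow> complex \<Rightarrow> real^4" where
  "normal_S3 \<phi> z = (THE n. norm n = 1 \<and> n \<bullet> dx \<phi> z = 0 \<and> n \<bullet> dy \<phi> z = 0 \<and> n \<bullet> \<phi> z = 0 \<and>
       det (vector [dx \<phi> z, dy \<phi> z, \<phi> z, n] :: real^4^4) > 0)"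

definition hopf_S3 :: "(complex \<Rightarrow> real^4) \<Rightarrow> complex \<Rightarrow> complex" where
  "hopf_S3 \<phi> z = cbil (dz \<phi> z) (dz (normal_S3 \<phi>) z)"

section \<open>Lambda^2 R^4, represented in the orthonormal basis
  e12, e13, e14, e23, e24, e34 (components 1..6)\<close>

definition wedge :: "real^4 \<Rightarrow> real^4 \<Rightarrow> real^6" where
  "wedge a b = vector [a$1*b$2 - a$2*b$1, a$1*b$3 - a$3*b$1, a$1*b$4 - a$4*b$1,
                       a$2*b$3 - a$3*b$2, a$2*b$4 - a$4*b$2, a$3*b$4 - a$4*b$3]"

text \<open>Hodge star for the standard orientation e1 e2 e3 e4.\<close>
definition hodge :: "real^6 \<Rightarrow> real^6" where
  "hodge w = vector [w$6, - w$5, w$4, w$3, - w$2, w$1]"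

definition Lambda2plus :: "(real^6) set" where "Lambda2plus = {w. hodge w = w}"

definition S2plus :: "(real^6) set" where "S2plus = {w. w \<in> Lambda2plus \<and> norm w = 1}"

definition nu_plus :: "(complex \<Rightarrow> real^4) \<Rightarrow> complex \<Rightarrow> real^6" where
  "nu_plus \<phi> z = scaleR (1 / sqrt 2)
     (wedge (scaleR (1 / norm (dx \<phi> z)) (dx \<phi> z)) (scaleR (1 / norm (dy \<phi> z)) (dy \<phi> z))
      + wedge (\<phi> z) (normal_S3 \<phi> z))"

definition TanS2R :: "(real^6) \<times> real \<Rightarrow> ((real^6) \<times> real) set" where
  "TanS2R p = {u. fst u \<in> Lambda2plus \<and> fst u \<bullet> fst p = 0}"

definition hopf_S2R :: "(complex \<Rightarrow> (real^6) \<times> real) \<Rightarrow> complex \<Rightarrow> complex" where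
  "hopf_S2R \<Phi> z = cbil (dz (\<lambda>w. fst (\<Phi> w)) z) (dz (\<lambda>w. fst (\<Phi> w)) z)"

end

theory Submission
  imports Defs
begin

text \<open>
  Write \<open>E = e\<^sup>2\<^sup>v\<close>. Since the Hopf differential of \<open>\<phi>\<close> is known, the Gauss--Weingarten
  equations express all second derivatives of the frame \<open>\<phi>\<^sub>x, \<phi>\<^sub>y, \<phi>, N\<close> in terms of the frame,
  \<open>v\<^sub>x\<close>, \<open>v\<^sub>y\<close> and \<open>t\<close>. Hence \<open>\<nu> = (E\<^sup>-\<^sup>1 \<phi>\<^sub>x \<and> \<phi>\<^sub>y + \<phi> \<and> N) / \<surd>2\<close> can be differentiated
  explicitly: it is a self-dual unit bivector with
  \<open>|\<nu>\<^sub>x|\<^sup>2 = E + 2 cos t + E\<^sup>-\<^sup>1\<close>, \<open>|\<nu>\<^sub>y|\<^sup>2 = E - 2 cos t + E\<^sup>-\<^sup>1\<close>, \<open>\<nu>\<^sub>x \<cdot> \<nu>\<^sub>y = -2 sin t\<close> and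
  \<open>\<Delta>\<nu> = -2 (E + E\<^sup>-\<^sup>1) \<nu>\<close>. The height \<open>2 Im (z e\<^sup>i\<^sup>t\<^sup>/\<^sup>2)\<close> is linear with gradient
  \<open>(2 sin (t/2), 2 cos (t/2))\<close>; adding its contribution turns the metric into
  \<open>E + 2 + E\<^sup>-\<^sup>1 = 4 cosh\<^sup>2 v\<close> and the Hopf differential into \<open>e\<^sup>i\<^sup>t\<close>. As \<open>\<Delta>\<nu>\<close> is parallel to
  \<open>\<nu>\<close> and the height is harmonic, \<open>\<Delta>\<Phi>\<close> is normal to \<open>S\<^sup>2\<^sub>+ \<times> \<real>\<close>, i.e. \<open>\<Phi>\<close> is minimal.
\<close>

lemma vector_4 [simp]:
  "(vector [a, b, c, d] :: ('x::zero)^4) $ 1 = a"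
  "(vector [a, b, c, d] :: ('x::zero)^4) $ 2 = b"
  "(vector [a, b, c, d] :: ('x::zero)^4) $ 3 = c"
  "(vector [a, b, c, d] :: ('x::zero)^4) $ 4 = d"
  unfolding vector_def by simp_all

lemma vector_6 [simp]:
  "(vector [a, b, c, d, e, f] :: ('x::zero)^6) $ 1 = a"
  "(vector [a, b, c, d, e, f] :: ('x::zero)^6) $ 2 = b"
  "(vector [a, b, c, d, e, f] :: ('x::zero)^6) $ 3 = c"
  "(vector [a, b, c, d, e, f] :: ('x::zero)^6) $ 4 = d"
  "(vector [a, b, c, d, e, f] :: ('x::zero)^6) $ 5 = e"
  "(vector [a, b, c, d, e, f] :: ('x::zero)^6) $ 6 = f"
  unfolding vector_def by simp_all

lemma exhaust_6:
  fixes x :: 6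
  shows "x = 1 \<or> x = 2 \<or> x = 3 \<or> x = 4 \<or> x = 5 \<or> x = 6"
proof (induct x)
  case (of_int z)
  then have "z = 0 \<or> z = 1 \<or> z = 2 \<or> z = 3 \<or> z = 4 \<or> z = 5" by fastforce
  then show ?case by auto
qed

lemma forall_6: "(\<forall>i::6. P i) \<longleftrightarrow> P 1 \<and> P 2 \<and> P 3 \<and> P 4 \<and> P 5 \<and> P 6"
  by (metis exhaust_6)

lemma UNIV_6: "UNIV = {1, 2, 3, 4, 5, 6::6}"
  using exhaust_6 by auto

lemma sum_6: "sum f (UNIV::6 set) = f 1 + f 2 + f 3 + f 4 + f 5 + f 6"
  unfolding UNIV_6 by (simp add: ac_simps)

lemma inner_vec_4: "(x::real^4) \<bullet> y = x$1*y$1 + x$2*y$2 + x$3*y$3 + x$4*y$4"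
  by (simp add: inner_vec_def sum_4)

lemma inner_vec_6: "(x::real^6) \<bullet> y = x$1*y$1 + x$2*y$2 + x$3*y$3 + x$4*y$4 + x$5*y$5 + x$6*y$6"
  by (simp add: inner_vec_def sum_6)

lemma vec_eq_iff_6:
  "(x::real^6) = y \<longleftrightarrow> x$1 = y$1 \<and> x$2 = y$2 \<and> x$3 = y$3 \<and> x$4 = y$4 \<and> x$5 = y$5 \<and> x$6 = y$6"
  by (simp add: vec_eq_iff forall_6)

lemma det_4: "det (A::'a::comm_ring_1^4^4) =
   A$1$1*A$2$2*A$3$3*A$4$4 - A$1$1*A$2$2*A$3$4*A$4$3 - A$1$1*A$2$3*A$3$2*A$4$4
 + A$1$1*A$2$3*A$3$4*A$4$2 + A$1$1*A$2$4*A$3$2*A$4$3 - A$1$1*A$2$4*A$3$3*A$4$2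
 - A$1$2*A$2$1*A$3$3*A$4$4 + A$1$2*A$2$1*A$3$4*A$4$3 + A$1$2*A$2$3*A$3$1*A$4$4
 - A$1$2*A$2$3*A$3$4*A$4$1 - A$1$2*A$2$4*A$3$1*A$4$3 + A$1$2*A$2$4*A$3$3*A$4$1
 + A$1$3*A$2$1*A$3$2*A$4$4 - A$1$3*A$2$1*A$3$4*A$4$2 - A$1$3*A$2$2*A$3$1*A$4$4
 + A$1$3*A$2$2*A$3$4*A$4$1 + A$1$3*A$2$4*A$3$1*A$4$2 - A$1$3*A$2$4*A$3$2*A$4$1
 - A$1$4*A$2$1*A$3$2*A$4$3 + A$1$4*A$2$1*A$3$3*A$4$2 + A$1$4*A$2$2*A$3$1*A$4$3
 - A$1$4*A$2$2*A$3$3*A$4$1 - A$1$4*A$2$3*A$3$1*A$4$2 + A$1$4*A$2$3*A$3$2*A$4$1"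
proof -
  have f1: "finite {2::4, 3, 4}" "1 \<notin> {2::4, 3, 4}" by auto
  have f2: "finite {3::4, 4}" "2 \<notin> {3::4, 4}" by auto
  have f3: "finite {4::4}" "3 \<notin> {4::4}" by auto
  show ?thesis
    unfolding det_def UNIV_4 sum_over_permutations_insert[OF f1]
      sum_over_permutations_insert[OF f2] sum_over_permutations_insert[OF f3] permutes_sing
    by (simp add: sign_swap_id permutation_swap_id sign_compose permutation_compose sign_id
        swap_id_eq algebra_simps)
qed

section \<open>The exterior square \<open>\<Lambda>\<^sup>2 \<real>\<^sup>4\<close>\<close>

lemma wedge_nth [simp]:
  "wedge a b $ 1 = a$1*b$2 - a$2*b$1" "wedge a b $ 2 = a$1*b$3 - a$3*b$1"
  "wedge a b $ 3 = a$1*b$4 - a$4*b$1" "wedge a b $ 4 = a$2*b$3 - a$3*b$2"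
  "wedge a b $ 5 = a$2*b$4 - a$4*b$2" "wedge a b $ 6 = a$3*b$4 - a$4*b$3"
  by (simp_all add: wedge_def)

lemma hodge_nth [simp]:
  "hodge w $ 1 = w$6" "hodge w $ 2 = - w$5" "hodge w $ 3 = w$4"
  "hodge w $ 4 = w$3" "hodge w $ 5 = - w$2" "hodge w $ 6 = w$1"
  by (simp_all add: hodge_def)

lemma inner_wedge: "wedge a b \<bullet> wedge c d = (a \<bullet> c) * (b \<bullet> d) - (a \<bullet> d) * (b \<bullet> c)"
  unfolding inner_vec_6 inner_vec_4 by (simp; algebra)

lemma wedge_add_left: "wedge (a + b) c = wedge a c + wedge b c"
  and wedge_add_right: "wedge c (a + b) = wedge c a + wedge c b"
  and wedge_scaleR_left: "wedge (r *\<^sub>R a) c = r *\<^sub>R wedge a c"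
  and wedge_scaleR_right: "wedge c (r *\<^sub>R a) = r *\<^sub>R wedge c a"
  by (simp_all add: vec_eq_iff_6 algebra_simps)

lemma bounded_bilinear_wedge: "bounded_bilinear wedge"
proof -
  have "bilinear wedge"
    unfolding bilinear_def
    by (auto intro!: linearI simp: wedge_add_left wedge_add_right wedge_scaleR_left wedge_scaleR_right)
  then show ?thesis by (rule bilinear_conv_bounded_bilinear[THEN iffD1])
qed

lemma hodge_hodge [simp]: "hodge (hodge w) = w"
  by (simp add: vec_eq_iff_6)

lemma inner_hodge: "hodge u \<bullet> hodge w = u \<bullet> w"
  unfolding inner_vec_6 by simp

lemma hodge_add: "hodge (u + w) = hodge u + hodge w"
  and hodge_scaleR: "hodge (r *\<^sub>R u) = r *\<^sub>R hodge u"
  by (simp_all add: vec_eq_iff_6)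

definition det4 :: "real^4 \<Rightarrow> real^4 \<Rightarrow> real^4 \<Rightarrow> real^4 \<Rightarrow> real" where
  "det4 a b c d = det (vector [a, b, c, d] :: real^4^4)"

lemma det4_eq_inner_hodge_wedge: "det4 a b c d = hodge (wedge a b) \<bullet> wedge c d"
  unfolding det4_def det_4 inner_vec_6 by (simp; algebra)

definition cross4 :: "real^4 \<Rightarrow> real^4 \<Rightarrow> real^4 \<Rightarrow> real^4" where
  "cross4 a b c = (\<chi> k. hodge (wedge a b) \<bullet> wedge c (axis k 1))"

lemma inner_cross4: "cross4 a b c \<bullet> d = det4 a b c d"
  unfolding det4_eq_inner_hodge_wedge inner_vec_4 inner_vec_6 cross4_def
  by (simp add: axis_def; algebra)

lemma cross4_orthogonal: "cross4 a b c \<bullet> a = 0" "cross4 a b c \<bullet> b = 0" "cross4 a b c \<bullet> c = 0"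
  unfolding inner_cross4 det4_eq_inner_hodge_wedge inner_vec_6 by (simp_all, algebra+)

lemma cross4_inner_self:
  "cross4 a b c \<bullet> cross4 a b c = (a\<bullet>a)*(b\<bullet>b)*(c\<bullet>c) + 2*(a\<bullet>b)*(b\<bullet>c)*(a\<bullet>c)
     - (a\<bullet>a)*(b\<bullet>c)^2 - (b\<bullet>b)*(a\<bullet>c)^2 - (c\<bullet>c)*(a\<bullet>b)^2"
  unfolding inner_vec_4 cross4_def inner_vec_6 by (simp add: axis_def; algebra)

lemma bounded_bilinear_cross4: "bounded_bilinear (\<lambda>w c. \<chi> k. hodge w \<bullet> wedge c (axis k 1))"
proof -
  have "bilinear (\<lambda>w c. \<chi> k. hodge w \<bullet> wedge c (axis k 1))"
    unfolding bilinear_def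
    by (auto intro!: linearI simp: vec_eq_iff hodge_add hodge_scaleR inner_add_left inner_add_right
        wedge_add_left wedge_scaleR_left)
  then show ?thesis by (rule bilinear_conv_bounded_bilinear[THEN iffD1])
qed

lemma det4_square_orthogonal:
  assumes "a \<bullet> b = 0" "a \<bullet> c = 0" "b \<bullet> c = 0"
  shows "(det4 a b c w)^2 = (a\<bullet>a)*(b\<bullet>b)*(c\<bullet>c)*(w\<bullet>w) - (b\<bullet>b)*(c\<bullet>c)*(a\<bullet>w)^2
          - (a\<bullet>a)*(c\<bullet>c)*(b\<bullet>w)^2 - (a\<bullet>a)*(b\<bullet>b)*(c\<bullet>w)^2"
proof -
  let ?M = "vector [a, b, c, w] :: real^4^4"
  have Gram: "(?M ** transpose ?M) $ i $ j = ?M$i \<bullet> ?M$j" for i j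
    by (simp add: matrix_matrix_mult_def transpose_def inner_vec_def)
  have "(det4 a b c w)^2 = det (?M ** transpose ?M)"
    by (simp add: det4_def det_mul power2_eq_square)
  also have "\<dots> = (a\<bullet>a)*(b\<bullet>b)*(c\<bullet>c)*(w\<bullet>w) - (b\<bullet>b)*(c\<bullet>c)*(a\<bullet>w)^2
          - (a\<bullet>a)*(c\<bullet>c)*(b\<bullet>w)^2 - (a\<bullet>a)*(b\<bullet>b)*(c\<bullet>w)^2"
    unfolding det_4 Gram using assms by (simp add: inner_commute power2_eq_square; algebra)
  finally show ?thesis .
qed

lemma orthogonal_expansion_cross4:
  assumes orth: "a \<bullet> b = 0" "a \<bullet> c = 0" "b \<bullet> c = 0"
    and nz: "a \<bullet> a > 0" "b \<bullet> b > 0" "c \<bullet> c > 0"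
  shows "w = (w \<bullet> a / (a \<bullet> a)) *\<^sub>R a + (w \<bullet> b / (b \<bullet> b)) *\<^sub>R b + (w \<bullet> c / (c \<bullet> c)) *\<^sub>R c
           + (w \<bullet> cross4 a b c / (cross4 a b c \<bullet> cross4 a b c)) *\<^sub>R cross4 a b c"
proof -
  define k where "k = cross4 a b c"
  have "k \<bullet> k = (a\<bullet>a)*(b\<bullet>b)*(c\<bullet>c)"
    unfolding k_def cross4_inner_self using orth by (simp add: inner_commute)
  then have k: "k \<bullet> k > 0" using nz by simp
  have ka: "k \<bullet> a = 0" "k \<bullet> b = 0" "k \<bullet> c = 0"
    unfolding k_def by (simp_all add: cross4_orthogonal)
  define d where "d = w - ((w \<bullet> a / (a \<bullet> a)) *\<^sub>R a + (w \<bullet> b / (b \<bullet> b)) *\<^sub>R b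
    + (w \<bullet> c / (c \<bullet> c)) *\<^sub>R c + (w \<bullet> k / (k \<bullet> k)) *\<^sub>R k)"
  have d: "a \<bullet> d = 0" "b \<bullet> d = 0" "c \<bullet> d = 0" "k \<bullet> d = 0"
    unfolding d_def using orth ka nz k
    by (simp_all add: inner_diff_right inner_add_right inner_commute)
  have "det4 a b c d = 0"
    using d(4) unfolding k_def inner_cross4 .
  then have "d \<bullet> d = 0"
    using det4_square_orthogonal[OF orth, of d] d nz by simp
  then have "d = 0" by simp
  then show ?thesis unfolding d_def k_def by (simp add: algebra_simps)
qed

lemmas has_derivative_frechet = frechet_derivative_works[THEN iffD1]

lemma dx_dy_of_has_derivative:
  assumes "(f has_derivative D) (at z)"
  shows "dx f z = D 1" and "dy f z = D \<i>"
  using frechet_derivative_at[OF assms] by (simp_all add: dx_def dy_def)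

lemma dx_const [simp]: "dx (\<lambda>w. c) = (\<lambda>w. 0)"
  and dy_const [simp]: "dy (\<lambda>w. c) = (\<lambda>w. 0)"
  by (simp_all add: dx_def dy_def fun_eq_iff)

lemma
  assumes "f differentiable (at z)" and "g differentiable (at z)"
  shows dx_add [simp]: "dx (\<lambda>w. f w + g w) z = dx f z + dx g z"
    and dy_add [simp]: "dy (\<lambda>w. f w + g w) z = dy f z + dy g z"
    and dx_diff [simp]: "dx (\<lambda>w. f w - g w) z = dx f z - dx g z"
    and dy_diff [simp]: "dy (\<lambda>w. f w - g w) z = dy f z - dy g z"
  using dx_dy_of_has_derivative[OF has_derivative_add[OF assms[THEN has_derivative_frechet]]]
    dx_dy_of_has_derivative[OF has_derivative_diff[OF assms[THEN has_derivative_frechet]]]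
  by (simp_all add: dx_def dy_def)

lemma
  assumes "f differentiable (at z)" and "g differentiable (at z)"
  shows dx_Pair [simp]: "dx (\<lambda>w. (f w, g w)) z = (dx f z, dx g z)"
    and dy_Pair [simp]: "dy (\<lambda>w. (f w, g w)) z = (dy f z, dy g z)"
  using dx_dy_of_has_derivative[OF has_derivative_Pair[OF assms[THEN has_derivative_frechet]]]
  by (simp_all add: dx_def dy_def)

lemma
  assumes "bounded_bilinear B" and "f differentiable (at z)" and "g differentiable (at z)"
  shows dx_bilinear: "dx (\<lambda>w. B (f w) (g w)) z = B (dx f z) (g z) + B (f z) (dx g z)"
    and dy_bilinear: "dy (\<lambda>w. B (f w) (g w)) z = B (dy f z) (g z) + B (f z) (dy g z)"
    and differentiable_bilinear: "(\<lambda>w. B (f w) (g w)) differentiable (at z)"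
  using dx_dy_of_has_derivative[OF bounded_bilinear.FDERIV[OF assms(1) assms(2,3)[THEN has_derivative_frechet]]]
    bounded_bilinear.FDERIV[OF assms(1) assms(2,3)[THEN has_derivative_frechet]]
  by (auto simp: dx_def dy_def differentiable_def)

lemma
  assumes "bounded_linear L" and "f differentiable (at z)"
  shows dx_linear: "dx (\<lambda>w. L (f w)) z = L (dx f z)"
    and dy_linear: "dy (\<lambda>w. L (f w)) z = L (dy f z)"
    and differentiable_linear: "(\<lambda>w. L (f w)) differentiable (at z)"
  using dx_dy_of_has_derivative[OF bounded_linear.has_derivative[OF assms(1) assms(2)[THEN has_derivative_frechet]]]
    bounded_linear.has_derivative[OF assms(1) assms(2)[THEN has_derivative_frechet]]
  by (auto simp: dx_def dy_def differentiable_def)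

lemma
  fixes f :: "complex \<Rightarrow> real"
  assumes "f differentiable (at z)"
  shows dx_exp [simp]: "dx (\<lambda>w. exp (f w)) z = exp (f z) * dx f z"
    and dy_exp [simp]: "dy (\<lambda>w. exp (f w)) z = exp (f z) * dy f z"
    and differentiable_exp [simp]: "(\<lambda>w. exp (f w)) differentiable (at z)"
  using dx_dy_of_has_derivative[OF has_derivative_exp[OF assms[THEN has_derivative_frechet]]]
    has_derivative_exp[OF assms[THEN has_derivative_frechet]]
  by (auto simp: dx_def dy_def differentiable_def)

lemma dx_minus [simp]: "f differentiable (at z) \<Longrightarrow> dx (\<lambda>w. - f w) z = - dx f z"
  and dy_minus [simp]: "f differentiable (at z) \<Longrightarrow> dy (\<lambda>w. - f w) z = - dy f z"
  using dx_linear[OF bounded_linear_minus[OF bounded_linear_ident]]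
    dy_linear[OF bounded_linear_minus[OF bounded_linear_ident]] by auto

text \<open>Only instances with a fixed operator may be simp rules: for a variable \<open>B\<close> the left-hand
  side of \<open>dx_bilinear\<close> is not a higher-order pattern, and rewriting with it loops.\<close>
lemmas dx_scaleR [simp] = dx_bilinear[OF bounded_bilinear_scaleR]
lemmas dy_scaleR [simp] = dy_bilinear[OF bounded_bilinear_scaleR]
lemmas dx_mult [simp] = dx_bilinear[OF bounded_bilinear_mult]
lemmas dy_mult [simp] = dy_bilinear[OF bounded_bilinear_mult]
lemmas dx_inner [simp] = dx_bilinear[OF bounded_bilinear_inner]
lemmas dy_inner [simp] = dy_bilinear[OF bounded_bilinear_inner]
lemmas dx_wedge [simp] = dx_bilinear[OF bounded_bilinear_wedge]
lemmas dy_wedge [simp] = dy_bilinear[OF bounded_bilinear_wedge]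
lemmas differentiable_wedge [simp] = differentiable_bilinear[OF bounded_bilinear_wedge]
lemmas dx_vec_nth = dx_linear[OF bounded_linear_vec_nth]
lemmas dy_vec_nth = dy_linear[OF bounded_linear_vec_nth]

lemma dx_bounded_linear: "bounded_linear L \<Longrightarrow> dx L z = L 1"
  and dy_bounded_linear: "bounded_linear L \<Longrightarrow> dy L z = L \<i>"
  by (simp_all add: dx_dy_of_has_derivative bounded_linear_imp_has_derivative)

lemma dx_dy_inner_eq:
  assumes "\<And>w. f w \<bullet> g w = h w" and "f differentiable (at z)" and "g differentiable (at z)"
  shows "dx f z \<bullet> g z + f z \<bullet> dx g z = dx h z" and "dy f z \<bullet> g z + f z \<bullet> dy g z = dy h z"
proof -
  have h: "h = (\<lambda>w. f w \<bullet> g w)" using assms(1) by auto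
  show "dx f z \<bullet> g z + f z \<bullet> dx g z = dx h z" "dy f z \<bullet> g z + f z \<bullet> dy g z = dy h z"
    unfolding h using assms(2,3) by simp_all
qed

fun smooth_upto :: "nat \<Rightarrow> (complex \<Rightarrow> 'a::real_normed_vector) \<Rightarrow> bool" where
  "smooth_upto 0 f \<longleftrightarrow> (\<forall>z. f differentiable (at z))"
| "smooth_upto (Suc n) f \<longleftrightarrow>
     (\<forall>z. f differentiable (at z)) \<and> smooth_upto n (dx f) \<and> smooth_upto n (dy f)"

lemma smooth_upto_differentiable: "smooth_upto n f \<Longrightarrow> f differentiable (at z)"
  by (cases n) simp_all

lemma smooth_upto_Suc_imp: "smooth_upto (Suc n) f \<Longrightarrow> smooth_upto n f"
proof (induction n arbitrary: f)
  case (Suc n)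
  have "(\<forall>z. f differentiable (at z)) \<and> smooth_upto (Suc n) (dx f) \<and> smooth_upto (Suc n) (dy f)"
    using Suc.prems by (subst (asm) smooth_upto.simps(2))
  then show ?case
    using Suc.IH[of "dx f"] Suc.IH[of "dy f"] by (subst smooth_upto.simps(2)) blast
qed simp

lemma smooth_iff_smooth_upto: "smooth f \<longleftrightarrow> (\<forall>n. smooth_upto n f)"
proof
  assume f: "smooth f"
  have "g \<in> partials f \<Longrightarrow> smooth_upto n g" for n g
  proof (induction n arbitrary: g)
    case 0
    then show ?case using f by (simp add: smooth_def)
  next
    case (Suc n)
    then show ?case using f by (simp add: smooth_def partials.stepx partials.stepy)
  qed
  then show "\<forall>n. smooth_upto n f" using partials.base by blast
next
  assume f: "\<forall>n. smooth_upto n f"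
  have "g \<in> partials f \<Longrightarrow> \<forall>n. smooth_upto n g" for g
    by (induction rule: partials.induct) (use f in \<open>meson smooth_upto.simps(2)\<close>)+
  then show "smooth f" unfolding smooth_def using smooth_upto_differentiable by blast
qed

lemma smooth_differentiable: "smooth f \<Longrightarrow> f differentiable (at z)"
  using smooth_iff_smooth_upto smooth_upto_differentiable by blast

lemma smooth_dx: "smooth f \<Longrightarrow> smooth (dx f)"
  and smooth_dy: "smooth f \<Longrightarrow> smooth (dy f)"
  unfolding smooth_iff_smooth_upto by (metis smooth_upto.simps(2))+

lemma smooth_upto_const: "smooth_upto n (\<lambda>z. c)"
  by (induction n arbitrary: c) simp_all

lemma smooth_upto_add: "smooth_upto n f \<Longrightarrow> smooth_upto n g \<Longrightarrow> smooth_upto n (\<lambda>z. f z + g z)"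
proof (induction n arbitrary: f g)
  case (Suc n)
  then have "dx (\<lambda>z. f z + g z) = (\<lambda>z. dx f z + dx g z)" "dy (\<lambda>z. f z + g z) = (\<lambda>z. dy f z + dy g z)"
    by (simp_all add: fun_eq_iff)
  with Suc show ?case by simp
qed simp

lemma smooth_upto_bilinear:
  assumes B: "bounded_bilinear B"
  shows "smooth_upto n f \<Longrightarrow> smooth_upto n g \<Longrightarrow> smooth_upto n (\<lambda>z. B (f z) (g z))"
proof (induction n arbitrary: f g)
  case 0
  then show ?case by (simp add: differentiable_bilinear[OF B])
next
  case (Suc n)
  then have "dx (\<lambda>z. B (f z) (g z)) = (\<lambda>z. B (dx f z) (g z) + B (f z) (dx g z))"
    "dy (\<lambda>z. B (f z) (g z)) = (\<lambda>z. B (dy f z) (g z) + B (f z) (dy g z))"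
    by (simp_all add: fun_eq_iff dx_bilinear[OF B] dy_bilinear[OF B])
  moreover have "smooth_upto n f" "smooth_upto n g"
    using Suc.prems by (simp_all only: smooth_upto_Suc_imp)
  ultimately show ?case
    using Suc by (simp add: differentiable_bilinear[OF B] smooth_upto_add)
qed

lemma smooth_upto_linear:
  assumes L: "bounded_linear L"
  shows "smooth_upto n f \<Longrightarrow> smooth_upto n (\<lambda>z. L (f z))"
proof (induction n arbitrary: f)
  case 0
  then show ?case by (simp add: differentiable_linear[OF L])
next
  case (Suc n)
  then have "dx (\<lambda>z. L (f z)) = (\<lambda>z. L (dx f z))" "dy (\<lambda>z. L (f z)) = (\<lambda>z. L (dy f z))"
    by (simp_all add: fun_eq_iff dx_linear[OF L] dy_linear[OF L])
  with Suc show ?case by (simp add: differentiable_linear[OF L])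
qed

lemma smooth_upto_exp:
  fixes f :: "complex \<Rightarrow> real"
  shows "smooth_upto n f \<Longrightarrow> smooth_upto n (\<lambda>z. exp (f z))"
proof (induction n arbitrary: f)
  case (Suc n)
  then have "dx (\<lambda>z. exp (f z)) = (\<lambda>z. exp (f z) * dx f z)" "dy (\<lambda>z. exp (f z)) = (\<lambda>z. exp (f z) * dy f z)"
    by (simp_all add: fun_eq_iff)
  moreover have "smooth_upto n f"
    using Suc.prems by (simp only: smooth_upto_Suc_imp)
  ultimately show ?case
    using Suc by (simp add: smooth_upto_bilinear[OF bounded_bilinear_mult])
qed simp

lemma smooth_add: "smooth f \<Longrightarrow> smooth g \<Longrightarrow> smooth (\<lambda>z. f z + g z)"
  by (simp add: smooth_iff_smooth_upto smooth_upto_add)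

lemma smooth_bilinear: "bounded_bilinear B \<Longrightarrow> smooth f \<Longrightarrow> smooth g \<Longrightarrow> smooth (\<lambda>z. B (f z) (g z))"
  by (simp add: smooth_iff_smooth_upto smooth_upto_bilinear)

lemma smooth_linear: "bounded_linear L \<Longrightarrow> smooth f \<Longrightarrow> smooth (\<lambda>z. L (f z))"
  by (simp add: smooth_iff_smooth_upto smooth_upto_linear)

lemma smooth_exp: "smooth (f :: complex \<Rightarrow> real) \<Longrightarrow> smooth (\<lambda>z. exp (f z))"
  by (simp add: smooth_iff_smooth_upto smooth_upto_exp)

lemma smooth_bounded_linear: "bounded_linear L \<Longrightarrow> smooth L"
proof -
  assume L: "bounded_linear L"
  then have "dx L = (\<lambda>z. L 1)" "dy L = (\<lambda>z. L \<i>)"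
    by (simp_all add: fun_eq_iff dx_bounded_linear dy_bounded_linear)
  then have "smooth_upto n L" for n
    using L by (cases n) (simp_all add: smooth_upto_const bounded_linear_imp_differentiable)
  then show "smooth L" by (simp add: smooth_iff_smooth_upto)
qed

lemma smooth_Pair: "smooth f \<Longrightarrow> smooth g \<Longrightarrow> smooth (\<lambda>z. (f z, g z))"
  using smooth_add[of "\<lambda>z. (f z, 0)" "\<lambda>z. (0, g z)"]
    smooth_linear[OF bounded_linear_Pair[OF bounded_linear_ident bounded_linear_zero], of f]
    smooth_linear[OF bounded_linear_Pair[OF bounded_linear_zero bounded_linear_ident], of g]
  by simp

section \<open>Symmetry of mixed partial derivatives\<close>

lemma has_real_derivative_along_line:
  fixes f :: "complex \<Rightarrow> real"
  assumes "f differentiable (at (w + s *\<^sub>R u))"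
  shows "((\<lambda>s. f (w + s *\<^sub>R u)) has_real_derivative frechet_derivative f (at (w + s *\<^sub>R u)) u) (at s)"
proof -
  have "((\<lambda>s. w + s *\<^sub>R u) has_derivative (\<lambda>s. s *\<^sub>R u)) (at s)"
    by (auto intro!: derivative_eq_intros)
  from has_derivative_compose[OF this has_derivative_frechet[OF assms]]
  show ?thesis
    unfolding has_field_derivative_def
    by (rule has_derivative_eq_rhs)
      (simp add: fun_eq_iff linear.scaleR[OF linear_frechet_derivative[OF assms]])
qed

lemma has_real_derivative_dx_line:
  fixes f :: "complex \<Rightarrow> real"
  shows "f differentiable (at (w + of_real s)) \<Longrightarrow>
    ((\<lambda>s. f (w + of_real s)) has_real_derivative dx f (w + of_real s)) (at s)"
  using has_real_derivative_along_line[of f w s 1] by (simp add: dx_def scaleR_conv_of_real)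

lemma has_real_derivative_dy_line:
  fixes f :: "complex \<Rightarrow> real"
  shows "f differentiable (at (w + of_real s * \<i>)) \<Longrightarrow>
    ((\<lambda>s. f (w + of_real s * \<i>)) has_real_derivative dy f (w + of_real s * \<i>)) (at s)"
  using has_real_derivative_along_line[of f w s \<i>] by (simp add: dy_def scaleR_conv_of_real)

text \<open>The second difference \<open>g(z+h+ih) - g(z+h) - g(z+ih) + g(z)\<close>, expanded by the mean value
  theorem in the two possible orders.\<close>
lemma mixed_partials_mean_value:
  fixes g :: "complex \<Rightarrow> real"
  assumes g: "smooth g" and h: "h > 0"
  obtains \<xi> \<eta> where "cmod (\<xi> - z) \<le> 2*h" "cmod (\<eta> - z) \<le> 2*h" "dy (dx g) \<xi> = dx (dy g) \<eta>"
proof -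
  have dg: "g differentiable (at w)" "dx g differentiable (at w)" "dy g differentiable (at w)" for w
    using g by (simp_all add: smooth_differentiable smooth_dx smooth_dy)
  define \<Delta> where "\<Delta> = g (z + of_real h + of_real h * \<i>) - g (z + of_real h) - g (z + of_real h * \<i>) + g z"
  have "\<exists>s. 0 < s \<and> s < h \<and>
     (g (z + of_real h * \<i> + of_real h) - g (z + of_real h)) - (g (z + of_real h * \<i> + of_real 0) - g (z + of_real 0))
      = (h - 0) * (dx g (z + of_real h * \<i> + of_real s) - dx g (z + of_real s))"
    by (rule MVT2[OF h], rule DERIV_diff; rule has_real_derivative_dx_line, rule dg)
  then obtain s1 where s1: "0 < s1" "s1 < h"
    "\<Delta> = h * (dx g (z + of_real s1 + of_real h * \<i>) - dx g (z + of_real s1 + of_real 0 * \<i>))"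
    unfolding \<Delta>_def by (auto simp: algebra_simps)
  have "\<exists>r. 0 < r \<and> r < h \<and>
     dx g (z + of_real s1 + of_real h * \<i>) - dx g (z + of_real s1 + of_real 0 * \<i>)
      = (h - 0) * dy (dx g) (z + of_real s1 + of_real r * \<i>)"
    by (rule MVT2[OF h], rule has_real_derivative_dy_line, rule dg)
  then obtain r1 where r1: "0 < r1" "r1 < h" "\<Delta> = h * (h * dy (dx g) (z + of_real s1 + of_real r1 * \<i>))"
    using s1(3) by auto
  have "\<exists>r. 0 < r \<and> r < h \<and>
     (g (z + of_real h + of_real h * \<i>) - g (z + of_real h * \<i>)) - (g (z + of_real h + of_real 0 * \<i>) - g (z + of_real 0 * \<i>))
      = (h - 0) * (dy g (z + of_real h + of_real r * \<i>) - dy g (z + of_real r * \<i>))"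
    by (rule MVT2[OF h], rule DERIV_diff; rule has_real_derivative_dy_line, rule dg)
  then obtain r2 where r2: "0 < r2" "r2 < h"
    "\<Delta> = h * (dy g (z + of_real r2 * \<i> + of_real h) - dy g (z + of_real r2 * \<i> + of_real 0))"
    unfolding \<Delta>_def by (auto simp: algebra_simps)
  have "\<exists>s. 0 < s \<and> s < h \<and>
     dy g (z + of_real r2 * \<i> + of_real h) - dy g (z + of_real r2 * \<i> + of_real 0)
      = (h - 0) * dx (dy g) (z + of_real r2 * \<i> + of_real s)"
    by (rule MVT2[OF h], rule has_real_derivative_dx_line, rule dg)
  then obtain s2 where s2: "0 < s2" "s2 < h" "\<Delta> = h * (h * dx (dy g) (z + of_real r2 * \<i> + of_real s2))"
    using r2(3) by auto
  have "dy (dx g) (z + of_real s1 + of_real r1 * \<i>) = dx (dy g) (z + of_real r2 * \<i> + of_real s2)"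
    using r1(3) s2(3) h by simp
  moreover have "cmod (of_real s1 + of_real r1 * \<i>) \<le> 2*h" "cmod (of_real r2 * \<i> + of_real s2) \<le> 2*h"
    using norm_triangle_ineq[of "of_real s1" "of_real r1 * \<i>"] norm_triangle_ineq[of "of_real r2 * \<i>" "of_real s2"]
      s1 r1 s2 r2 by (simp_all add: norm_mult)
  ultimately show ?thesis
    using that[of "z + of_real s1 + of_real r1 * \<i>" "z + of_real r2 * \<i> + of_real s2"] by simp
qed

lemma mixed_partials_real:
  fixes g :: "complex \<Rightarrow> real"
  assumes g: "smooth g"
  shows "dy (dx g) z = dx (dy g) z"
proof (rule ccontr)
  assume ne: "dy (dx g) z \<noteq> dx (dy g) z"
  define e where "e = \<bar>dy (dx g) z - dx (dy g) z\<bar> / 2"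
  have e: "e > 0" using ne unfolding e_def by simp
  have "continuous (at z) (dy (dx g))" "continuous (at z) (dx (dy g))"
    using g by (simp_all add: differentiable_imp_continuous_within smooth_differentiable smooth_dx smooth_dy)
  then obtain d1 d2 where d: "d1 > 0" "d2 > 0"
    "\<And>w. dist w z < d1 \<Longrightarrow> dist (dy (dx g) w) (dy (dx g) z) < e"
    "\<And>w. dist w z < d2 \<Longrightarrow> dist (dx (dy g) w) (dx (dy g) z) < e"
    using e unfolding continuous_at_eps_delta by metis
  define h where "h = min d1 d2 / 4"
  have h: "h > 0" using d unfolding h_def by simp
  obtain \<xi> \<eta> where near: "cmod (\<xi> - z) \<le> 2*h" "cmod (\<eta> - z) \<le> 2*h"
    and eq: "dy (dx g) \<xi> = dx (dy g) \<eta>"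
    using mixed_partials_mean_value[OF g h] .
  from near have "\<bar>dy (dx g) \<xi> - dy (dx g) z\<bar> < e" "\<bar>dx (dy g) \<eta> - dx (dy g) z\<bar> < e"
    using d unfolding h_def dist_norm by (auto simp: dist_real_def)
  then show False using eq unfolding e_def by (auto simp: abs_if split: if_splits)
qed

lemma mixed_partials:
  fixes f :: "complex \<Rightarrow> real^'n"
  assumes f: "smooth f"
  shows "dy (dx f) z = dx (dy f) z"
proof -
  have df: "f differentiable (at w)" "dx f differentiable (at w)" "dy f differentiable (at w)" for w
    using f by (simp_all add: smooth_differentiable smooth_dx smooth_dy)
  have "dy (dx f) z $ i = dx (dy f) z $ i" for i
  proof -
    have dx_i: "dx (\<lambda>w. f w $ i) = (\<lambda>w. dx f w $ i)" and dy_i: "dy (\<lambda>w. f w $ i) = (\<lambda>w. dy f w $ i)"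
      by (simp_all add: fun_eq_iff dx_vec_nth dy_vec_nth df)
    have "dy (dx f) z $ i = dy (dx (\<lambda>w. f w $ i)) z"
      by (simp add: dx_i dy_vec_nth df)
    also have "\<dots> = dx (dy (\<lambda>w. f w $ i)) z"
      by (rule mixed_partials_real[OF smooth_linear[OF bounded_linear_vec_nth f]])
    also have "\<dots> = dx (dy f) z $ i"
      by (simp add: dy_i dx_vec_nth df)
    finally show ?thesis .
  qed
  then show ?thesis by (simp add: vec_eq_iff)
qed

section \<open>Minimal surfaces in \<open>S\<^sup>3\<close> with constant Hopf differential\<close>

locale minimal_S3 =
  fixes \<phi> :: "complex \<Rightarrow> real^4" and v :: "complex \<Rightarrow> real" and t :: real
  assumes smooth_v: "smooth v"
    and minimal: "isometric_minimal_immersion S3 TanS3 \<phi> (\<lambda>z. exp (2 * v z))"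
    and hopf: "hopf_S3 \<phi> z = \<i> / 2 * exp (\<i> * complex_of_real t)"
begin

lemma smooth_phi: "smooth \<phi>"
  and conformal: "dx \<phi> z \<bullet> dx \<phi> z = exp (2 * v z)" "dy \<phi> z \<bullet> dy \<phi> z = exp (2 * v z)"
    "dx \<phi> z \<bullet> dy \<phi> z = 0"
  and phi_unit: "\<phi> z \<bullet> \<phi> z = 1"
  using minimal unfolding isometric_minimal_immersion_def isometric_immersion_def S3_def
  by (simp_all add: norm_eq_1)

lemma minimality: "u \<bullet> \<phi> z = 0 \<Longrightarrow> u \<bullet> dx \<phi> z = 0 \<Longrightarrow> u \<bullet> dy \<phi> z = 0 \<Longrightarrow> lap \<phi> z \<bullet> u = 0"
  using minimal unfolding isometric_minimal_immersion_def TanS3_def by blast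

lemma smooth_dx_phi: "smooth (dx \<phi>)" and smooth_dy_phi: "smooth (dy \<phi>)"
  by (simp_all add: smooth_dx smooth_dy smooth_phi)

lemma differentiable_phi [simp]: "\<phi> differentiable (at z)" "dx \<phi> differentiable (at z)"
  "dy \<phi> differentiable (at z)" "v differentiable (at z)"
  by (simp_all add: smooth_differentiable smooth_phi smooth_dx_phi smooth_dy_phi smooth_v)

lemma mixed_partials_phi: "dx (dy \<phi>) z = dy (dx \<phi>) z"
  by (simp add: mixed_partials smooth_phi)

lemma phi_tangent: "\<phi> z \<bullet> dx \<phi> z = 0" "\<phi> z \<bullet> dy \<phi> z = 0"
  using dx_dy_inner_eq[of \<phi> \<phi> "\<lambda>w. 1", OF phi_unit] by (simp_all add: inner_commute)

lemma second_derivatives_phi: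
  "dx (dx \<phi>) z \<bullet> \<phi> z = - exp (2 * v z)" "dy (dx \<phi>) z \<bullet> \<phi> z = 0"
  "dy (dy \<phi>) z \<bullet> \<phi> z = - exp (2 * v z)"
  "dx (dx \<phi>) z \<bullet> dx \<phi> z = dx v z * exp (2 * v z)" "dy (dx \<phi>) z \<bullet> dx \<phi> z = dy v z * exp (2 * v z)"
  "dy (dx \<phi>) z \<bullet> dy \<phi> z = dx v z * exp (2 * v z)" "dy (dy \<phi>) z \<bullet> dy \<phi> z = dy v z * exp (2 * v z)"
  "dx (dx \<phi>) z \<bullet> dy \<phi> z = - dy v z * exp (2 * v z)" "dy (dy \<phi>) z \<bullet> dx \<phi> z = - dx v z * exp (2 * v z)"
proof -
  note x = dx_dy_inner_eq[of \<phi> "dx \<phi>" "\<lambda>w. 0" z, OF phi_tangent(1)]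
  note y = dx_dy_inner_eq[of \<phi> "dy \<phi>" "\<lambda>w. 0" z, OF phi_tangent(2)]
  note xx = dx_dy_inner_eq[of "dx \<phi>" "dx \<phi>" _ z, OF conformal(1)]
  note yy = dx_dy_inner_eq[of "dy \<phi>" "dy \<phi>" _ z, OF conformal(2)]
  note xy = dx_dy_inner_eq[of "dx \<phi>" "dy \<phi>" "\<lambda>w. 0" z, OF conformal(3)]
  show "dx (dx \<phi>) z \<bullet> \<phi> z = - exp (2 * v z)" "dy (dx \<phi>) z \<bullet> \<phi> z = 0"
    "dy (dy \<phi>) z \<bullet> \<phi> z = - exp (2 * v z)"
    using conformal[of z] x y by (auto simp: inner_commute)
  show xx': "dx (dx \<phi>) z \<bullet> dx \<phi> z = dx v z * exp (2 * v z)"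
    "dy (dx \<phi>) z \<bullet> dx \<phi> z = dy v z * exp (2 * v z)"
    "dy (dx \<phi>) z \<bullet> dy \<phi> z = dx v z * exp (2 * v z)" "dy (dy \<phi>) z \<bullet> dy \<phi> z = dy v z * exp (2 * v z)"
    using xx yy by (auto simp: inner_commute mixed_partials_phi)
  show "dx (dx \<phi>) z \<bullet> dy \<phi> z = - dy v z * exp (2 * v z)"
    "dy (dy \<phi>) z \<bullet> dx \<phi> z = - dx v z * exp (2 * v z)"
    using xy xx' by (auto simp: inner_commute mixed_partials_phi)
qed

definition N :: "complex \<Rightarrow> real^4" where
  "N z = exp (-2 * v z) *\<^sub>R cross4 (dx \<phi> z) (dy \<phi> z) (\<phi> z)"

lemma exp_v_inverse: "exp (- (2 * v z)) * exp (2 * v z) = 1" "exp (- 2 * v z) * exp (2 * v z) = 1"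
  by (simp_all add: exp_add[symmetric])

lemma cross4_frame_inner_self:
  "cross4 (dx \<phi> z) (dy \<phi> z) (\<phi> z) \<bullet> cross4 (dx \<phi> z) (dy \<phi> z) (\<phi> z) = exp (2 * v z) * exp (2 * v z)"
  unfolding cross4_inner_self using conformal phi_unit phi_tangent by (simp add: inner_commute)

lemma cross4_frame: "cross4 (dx \<phi> z) (dy \<phi> z) (\<phi> z) = exp (2 * v z) *\<^sub>R N z"
  unfolding N_def using exp_v_inverse by (simp add: mult.commute)

lemma N_unit: "N z \<bullet> N z = 1"
  using cross4_frame_inner_self exp_v_inverse unfolding N_def by (simp add: algebra_simps)

lemma N_orthogonal: "N z \<bullet> \<phi> z = 0" "N z \<bullet> dx \<phi> z = 0" "N z \<bullet> dy \<phi> z = 0"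
  unfolding N_def by (simp_all add: cross4_orthogonal)

lemma det4_frame: "det4 (dx \<phi> z) (dy \<phi> z) (\<phi> z) (N z) = exp (2 * v z)"
  unfolding inner_cross4[symmetric] cross4_frame using N_unit by simp

lemma frame_expansion:
  "w = (w \<bullet> dx \<phi> z / exp (2 * v z)) *\<^sub>R dx \<phi> z + (w \<bullet> dy \<phi> z / exp (2 * v z)) *\<^sub>R dy \<phi> z
     + (w \<bullet> \<phi> z) *\<^sub>R \<phi> z + (w \<bullet> N z) *\<^sub>R N z"
proof -
  have "dx \<phi> z \<bullet> dy \<phi> z = 0" "dx \<phi> z \<bullet> \<phi> z = 0" "dy \<phi> z \<bullet> \<phi> z = 0"
    "dx \<phi> z \<bullet> dx \<phi> z > 0" "dy \<phi> z \<bullet> dy \<phi> z > 0" "\<phi> z \<bullet> \<phi> z > 0"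
    using conformal phi_unit phi_tangent by (simp_all add: inner_commute)
  from orthogonal_expansion_cross4[OF this, of w]
  show ?thesis
    unfolding cross4_frame using conformal phi_unit N_unit by (simp add: scaleR_scaleR)
qed

lemma normal_S3_eq: "normal_S3 \<phi> z = N z"
  unfolding normal_S3_def
proof (rule the_equality)
  show "norm (N z) = 1 \<and> N z \<bullet> dx \<phi> z = 0 \<and> N z \<bullet> dy \<phi> z = 0 \<and> N z \<bullet> \<phi> z = 0 \<and>
     0 < det (vector [dx \<phi> z, dy \<phi> z, \<phi> z, N z] :: real^4^4)"
    using N_unit N_orthogonal det4_frame by (simp add: norm_eq_1 det4_def)
next
  fix n :: "real^4"
  assume n: "norm n = 1 \<and> n \<bullet> dx \<phi> z = 0 \<and> n \<bullet> dy \<phi> z = 0 \<and> n \<bullet> \<phi> z = 0 \<and>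
     0 < det (vector [dx \<phi> z, dy \<phi> z, \<phi> z, n] :: real^4^4)"
  then have n_N: "n = (n \<bullet> N z) *\<^sub>R N z" and "n \<bullet> n = 1"
    using frame_expansion[of n z] by (simp_all add: norm_eq_1)
  then have "(n \<bullet> N z)^2 = 1"
    by (metis N_unit inner_scaleR_left inner_scaleR_right mult.right_neutral power2_eq_square)
  moreover have "exp (2 * v z) * (n \<bullet> N z) > 0"
    using n inner_cross4[of "dx \<phi> z" "dy \<phi> z" "\<phi> z" n]
    unfolding cross4_frame by (simp add: det4_def inner_commute)
  then have "n \<bullet> N z > 0" by (simp add: zero_less_mult_iff)
  ultimately have "n \<bullet> N z = 1" by (simp add: power2_eq_1_iff)
  with n_N show "n = N z" by simp
qed

lemma smooth_N: "smooth N"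
proof -
  have "N = (\<lambda>z. exp (-2 * v z) *\<^sub>R (\<chi> k. hodge (wedge (dx \<phi> z) (dy \<phi> z)) \<bullet> wedge (\<phi> z) (axis k 1)))"
    by (simp add: fun_eq_iff N_def cross4_def)
  then show ?thesis
    by (simp only:) (intro smooth_bilinear[OF bounded_bilinear_scaleR] smooth_exp
        smooth_linear[OF bounded_linear_mult_right] smooth_bilinear[OF bounded_bilinear_cross4]
        smooth_bilinear[OF bounded_bilinear_wedge] smooth_v smooth_phi smooth_dx_phi smooth_dy_phi)
qed

lemma differentiable_N [simp]: "N differentiable (at z)"
  by (rule smooth_differentiable[OF smooth_N])

lemma derivatives_N:
  "dx N z \<bullet> N z = 0" "dy N z \<bullet> N z = 0" "dx N z \<bullet> \<phi> z = 0" "dy N z \<bullet> \<phi> z = 0"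
  "dx N z \<bullet> dx \<phi> z = - (dx (dx \<phi>) z \<bullet> N z)" "dy N z \<bullet> dx \<phi> z = - (dy (dx \<phi>) z \<bullet> N z)"
  "dx N z \<bullet> dy \<phi> z = - (dy (dx \<phi>) z \<bullet> N z)" "dy N z \<bullet> dy \<phi> z = - (dy (dy \<phi>) z \<bullet> N z)"
  using N_orthogonal[of z] dx_dy_inner_eq[of N N "\<lambda>w. 1" z, OF N_unit]
    dx_dy_inner_eq[of N \<phi> "\<lambda>w. 0" z, OF N_orthogonal(1)]
    dx_dy_inner_eq[of N "dx \<phi>" "\<lambda>w. 0" z, OF N_orthogonal(2)]
    dx_dy_inner_eq[of N "dy \<phi>" "\<lambda>w. 0" z, OF N_orthogonal(3)]
  by (auto simp: inner_commute mixed_partials_phi)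

lemma trace_free: "dy (dy \<phi>) z \<bullet> N z = - (dx (dx \<phi>) z \<bullet> N z)"
proof -
  have "lap \<phi> z \<bullet> N z = 0"
    by (rule minimality) (rule N_orthogonal)+
  then show ?thesis
    unfolding lap_def inner_add_left by (simp add: inner_commute; linarith)
qed

lemma hopf_coefficients: "dx (dx \<phi>) z \<bullet> N z = sin t" "dy (dx \<phi>) z \<bullet> N z = cos t"
proof -
  have "normal_S3 \<phi> = N" by (simp add: fun_eq_iff normal_S3_eq)
  then have "Re (hopf_S3 \<phi> z) = - (dx (dx \<phi>) z \<bullet> N z) / 2"
    "Im (hopf_S3 \<phi> z) = (dy (dx \<phi>) z \<bullet> N z) / 2"
    unfolding hopf_S3_def dz_def cbil_def using derivatives_N[of z] trace_free[of z]
    by (simp_all add: inner_commute)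
  moreover have "Re (hopf_S3 \<phi> z) = - sin t / 2" "Im (hopf_S3 \<phi> z) = cos t / 2"
    unfolding hopf by (simp_all add: Re_exp Im_exp)
  ultimately show "dx (dx \<phi>) z \<bullet> N z = sin t" "dy (dx \<phi>) z \<bullet> N z = cos t"
    by linarith+
qed

lemma structure_equations:
  "dx (dx \<phi>) z = dx v z *\<^sub>R dx \<phi> z - dy v z *\<^sub>R dy \<phi> z - exp (2 * v z) *\<^sub>R \<phi> z + sin t *\<^sub>R N z"
  "dy (dx \<phi>) z = dy v z *\<^sub>R dx \<phi> z + dx v z *\<^sub>R dy \<phi> z + cos t *\<^sub>R N z"
  "dy (dy \<phi>) z = - dx v z *\<^sub>R dx \<phi> z + dy v z *\<^sub>R dy \<phi> z - exp (2 * v z) *\<^sub>R \<phi> z - sin t *\<^sub>R N z"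
  "dx N z = - (sin t * exp (-2 * v z)) *\<^sub>R dx \<phi> z - (cos t * exp (-2 * v z)) *\<^sub>R dy \<phi> z"
  "dy N z = - (cos t * exp (-2 * v z)) *\<^sub>R dx \<phi> z + (sin t * exp (-2 * v z)) *\<^sub>R dy \<phi> z"
proof -
  note coefficients = second_derivatives_phi[of z] derivatives_N[of z] hopf_coefficients[of z]
    trace_free[of z] phi_tangent[of z] mixed_partials_phi[of z]
  show "dx (dx \<phi>) z = dx v z *\<^sub>R dx \<phi> z - dy v z *\<^sub>R dy \<phi> z - exp (2 * v z) *\<^sub>R \<phi> z + sin t *\<^sub>R N z"
    by (subst frame_expansion[of "dx (dx \<phi>) z" z]) (simp add: coefficients)
  show "dy (dx \<phi>) z = dy v z *\<^sub>R dx \<phi> z + dx v z *\<^sub>R dy \<phi> z + cos t *\<^sub>R N z"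
    by (subst frame_expansion[of "dy (dx \<phi>) z" z]) (simp add: coefficients)
  show "dy (dy \<phi>) z = - dx v z *\<^sub>R dx \<phi> z + dy v z *\<^sub>R dy \<phi> z - exp (2 * v z) *\<^sub>R \<phi> z - sin t *\<^sub>R N z"
    by (subst frame_expansion[of "dy (dy \<phi>) z" z]) (simp add: coefficients)
  show "dx N z = - (sin t * exp (-2 * v z)) *\<^sub>R dx \<phi> z - (cos t * exp (-2 * v z)) *\<^sub>R dy \<phi> z"
    by (subst frame_expansion[of "dx N z" z]) (simp add: coefficients exp_minus divide_inverse)
  show "dy N z = - (cos t * exp (-2 * v z)) *\<^sub>R dx \<phi> z + (sin t * exp (-2 * v z)) *\<^sub>R dy \<phi> z"
    by (subst frame_expansion[of "dy N z" z]) (simp add: coefficients exp_minus divide_inverse)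
qed

lemma frame_inner:
  "\<phi> z \<bullet> \<phi> z = 1" "N z \<bullet> N z = 1"
  "dx \<phi> z \<bullet> dx \<phi> z = exp (2 * v z)" "dy \<phi> z \<bullet> dy \<phi> z = exp (2 * v z)"
  "dx \<phi> z \<bullet> dy \<phi> z = 0" "dy \<phi> z \<bullet> dx \<phi> z = 0"
  "\<phi> z \<bullet> dx \<phi> z = 0" "dx \<phi> z \<bullet> \<phi> z = 0" "\<phi> z \<bullet> dy \<phi> z = 0" "dy \<phi> z \<bullet> \<phi> z = 0"
  "N z \<bullet> \<phi> z = 0" "\<phi> z \<bullet> N z = 0" "N z \<bullet> dx \<phi> z = 0" "dx \<phi> z \<bullet> N z = 0"
  "N z \<bullet> dy \<phi> z = 0" "dy \<phi> z \<bullet> N z = 0"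
  using phi_unit N_unit conformal phi_tangent N_orthogonal by (simp_all add: inner_commute)

section \<open>The Gauss map \<open>\<nu>\<^sup>+\<close>\<close>

definition nu :: "complex \<Rightarrow> real^6" where
  "nu z = (1 / sqrt 2) *\<^sub>R (exp (-2 * v z) *\<^sub>R wedge (dx \<phi> z) (dy \<phi> z) + wedge (\<phi> z) (N z))"

definition nu_x :: "complex \<Rightarrow> real^6" where
  "nu_x z = (1 / sqrt 2) *\<^sub>R (wedge (dx \<phi> z) (N z) - wedge (\<phi> z) (dy \<phi> z) + exp (-2 * v z) *\<^sub>R
     (sin t *\<^sub>R wedge (N z) (dy \<phi> z) + cos t *\<^sub>R wedge (dx \<phi> z) (N z)
      - sin t *\<^sub>R wedge (\<phi> z) (dx \<phi> z) - cos t *\<^sub>R wedge (\<phi> z) (dy \<phi> z)))"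

definition nu_y :: "complex \<Rightarrow> real^6" where
  "nu_y z = (1 / sqrt 2) *\<^sub>R (wedge (\<phi> z) (dx \<phi> z) + wedge (dy \<phi> z) (N z) + exp (-2 * v z) *\<^sub>R
     (cos t *\<^sub>R wedge (N z) (dy \<phi> z) - sin t *\<^sub>R wedge (dx \<phi> z) (N z)
      - cos t *\<^sub>R wedge (\<phi> z) (dx \<phi> z) + sin t *\<^sub>R wedge (\<phi> z) (dy \<phi> z)))"

lemma nu_plus_eq: "nu_plus \<phi> z = nu z"
proof -
  have "sqrt (exp (2 * v z)) = exp (v z)"
    unfolding exp_double by simp
  then have "norm (dx \<phi> z) = exp (v z)" "norm (dy \<phi> z) = exp (v z)"
    by (simp_all add: norm_eq_sqrt_inner conformal)
  moreover have "(1 / exp (v z)) * (1 / exp (v z)) = exp (-2 * v z)"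
    by (simp add: exp_minus[symmetric] exp_add[symmetric] field_simps)
  ultimately show ?thesis
    unfolding nu_plus_def nu_def normal_S3_eq by (simp add: wedge_scaleR_left wedge_scaleR_right)
qed

lemma dx_nu: "dx nu z = nu_x z"
  unfolding nu_def[abs_def] nu_x_def
  by (simp add: structure_equations mixed_partials_phi vec_eq_iff_6)
    (insert exp_v_inverse[of z], intro conjI; algebra)

lemma dy_nu: "dy nu z = nu_y z"
  unfolding nu_def[abs_def] nu_y_def
  by (simp add: structure_equations vec_eq_iff_6)
    (insert exp_v_inverse[of z], intro conjI; algebra)

lemma partials_nu: "dx nu = nu_x" "dy nu = nu_y"
  by (simp_all add: fun_eq_iff dx_nu dy_nu)

lemma smooth_nu: "smooth nu"
  unfolding nu_def[abs_def]
  by (intro smooth_linear[OF bounded_linear_scaleR_right] smooth_add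
      smooth_bilinear[OF bounded_bilinear_scaleR] smooth_bilinear[OF bounded_bilinear_wedge]
      smooth_exp smooth_linear[OF bounded_linear_mult_right] smooth_v smooth_phi smooth_dx_phi
      smooth_dy_phi smooth_N)

lemma differentiable_nu [simp]: "nu differentiable (at z)" "nu_x differentiable (at z)"
  "nu_y differentiable (at z)"
  using smooth_nu partials_nu by (metis smooth_differentiable smooth_dx smooth_dy)+

lemma lap_nu: "lap nu z = - (2 * (exp (2 * v z) + exp (- (2 * v z)))) *\<^sub>R nu z"
proof -
  have "lap nu z = dx nu_x z + dy nu_y z" by (simp add: lap_def partials_nu)
  also have "\<dots> = - (2 * (exp (2 * v z) + exp (- (2 * v z)))) *\<^sub>R nu z"
    unfolding nu_x_def[abs_def] nu_y_def[abs_def] nu_def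
    by (simp add: structure_equations mixed_partials_phi vec_eq_iff_6)
      (insert exp_v_inverse(1)[of z] sin_cos_squared_add[of t], intro conjI; algebra)
  finally show ?thesis .
qed

lemma sqrt2_inverse_square: "(1 / sqrt 2) * (1 / sqrt 2) = (1 / 2 :: real)"
  by (simp add: real_sqrt_mult[symmetric])

lemmas inner_expand = inner_add_left inner_add_right inner_diff_left inner_diff_right
  inner_scaleR_left inner_scaleR_right inner_wedge frame_inner

lemma inner_nu:
  "nu z \<bullet> nu z = 1"
  "nu_x z \<bullet> nu_x z = exp (2 * v z) + 2 * cos t + exp (- (2 * v z))"
  "nu_y z \<bullet> nu_y z = exp (2 * v z) - 2 * cos t + exp (- (2 * v z))"
  "nu_x z \<bullet> nu_y z = - 2 * sin t"
  unfolding nu_def nu_x_def nu_y_def inner_expand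
  using exp_v_inverse[of z] sin_cos_squared_add[of t] sqrt2_inverse_square
  by algebra+

text \<open>\<open>|\<star>(\<phi>\<^sub>x \<and> \<phi>\<^sub>y) - E \<phi> \<and> N|\<^sup>2 = E\<^sup>2 - 2 E det4 \<phi>\<^sub>x \<phi>\<^sub>y \<phi> N + E\<^sup>2 = 0\<close>, where \<open>E = exp (2 v)\<close>.\<close>
lemma hodge_wedge_tangent: "hodge (wedge (dx \<phi> z) (dy \<phi> z)) = exp (2 * v z) *\<^sub>R wedge (\<phi> z) (N z)"
proof -
  define d where "d = hodge (wedge (dx \<phi> z) (dy \<phi> z)) - exp (2 * v z) *\<^sub>R wedge (\<phi> z) (N z)"
  have "d \<bullet> d = hodge (wedge (dx \<phi> z) (dy \<phi> z)) \<bullet> hodge (wedge (dx \<phi> z) (dy \<phi> z))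
     - 2 * exp (2 * v z) * det4 (dx \<phi> z) (dy \<phi> z) (\<phi> z) (N z)
     + exp (2 * v z) * exp (2 * v z) * (wedge (\<phi> z) (N z) \<bullet> wedge (\<phi> z) (N z))"
    unfolding d_def det4_eq_inner_hodge_wedge
    by (simp add: inner_diff_left inner_diff_right inner_commute algebra_simps)
  also have "\<dots> = 0"
    unfolding inner_hodge det4_frame inner_wedge frame_inner by simp
  finally show ?thesis unfolding d_def by simp
qed

lemma nu_self_dual: "hodge (nu z) = nu z"
proof -
  have "hodge (wedge (\<phi> z) (N z)) = exp (- (2 * v z)) *\<^sub>R wedge (dx \<phi> z) (dy \<phi> z)"
    using arg_cong[OF hodge_wedge_tangent[of z], of hodge] exp_v_inverse[of z]
    by (simp add: hodge_scaleR)
  then show ?thesis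
    unfolding nu_def hodge_scaleR hodge_add hodge_wedge_tangent using exp_v_inverse[of z]
    by (simp add: algebra_simps)
qed

lemma nu_in_S2plus: "nu z \<in> S2plus"
  using nu_self_dual inner_nu(1) by (simp add: S2plus_def Lambda2plus_def norm_eq_1)

end

section \<open>The associated surface in \<open>S\<^sup>2 \<times> \<real>\<close>\<close>

lemma four_cosh_square: "4 * (cosh x)\<^sup>2 = exp (2 * x) + 2 + exp (- (2 * x :: real))"
  by (simp add: cosh_def power2_eq_square algebra_simps exp_add[symmetric])

context minimal_S3
begin

definition height :: "complex \<Rightarrow> real" where
  "height z = 2 * Im (z * exp (\<i> * complex_of_real t / 2))"

definition Phi :: "complex \<Rightarrow> (real^6) \<times> real" where
  "Phi z = (nu z, height z)"

lemma Phi_eq: "(\<lambda>z. (nu_plus \<phi> z, 2 * Im (z * exp (\<i> * complex_of_real t / 2)))) = Phi"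
  by (simp add: fun_eq_iff Phi_def height_def nu_plus_eq)

lemma bounded_linear_height: "bounded_linear height"
  unfolding height_def[abs_def]
  by (intro bounded_linear_compose[OF bounded_linear_mult_right]
      bounded_linear_compose[OF bounded_linear_Im bounded_linear_mult_left])

lemma partials_Phi: "dx Phi z = (nu_x z, 2 * sin (t / 2))" "dy Phi z = (nu_y z, 2 * cos (t / 2))"
proof -
  have "height 1 = 2 * sin (t / 2)" "height \<i> = 2 * cos (t / 2)"
    by (simp_all add: height_def Re_exp Im_exp)
  then show "dx Phi z = (nu_x z, 2 * sin (t / 2))" "dy Phi z = (nu_y z, 2 * cos (t / 2))"
    unfolding Phi_def[abs_def] using bounded_linear_height
    by (simp_all add: dx_nu dy_nu dx_bounded_linear dy_bounded_linear bounded_linear_imp_differentiable)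
qed

lemma smooth_Phi: "smooth Phi"
  unfolding Phi_def[abs_def]
  by (intro smooth_Pair smooth_nu smooth_bounded_linear bounded_linear_height)

lemma Phi_isometric: "isometric_immersion Phi (\<lambda>z. 4 * (cosh (v z))\<^sup>2)"
  unfolding isometric_immersion_def
proof (intro conjI allI smooth_Phi)
  fix z
  have "cos t = 1 - 2 * (sin (t/2))\<^sup>2" "cos t = 2 * (cos (t/2))\<^sup>2 - 1" "sin t = 2 * sin (t/2) * cos (t/2)"
    using cos_double_sin[of "t/2"] cos_double_cos[of "t/2"] sin_double[of "t/2"] by simp_all
  then show "dx Phi z \<bullet> dx Phi z = 4 * (cosh (v z))\<^sup>2" "dy Phi z \<bullet> dy Phi z = 4 * (cosh (v z))\<^sup>2"
    "dx Phi z \<bullet> dy Phi z = 0"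
    unfolding partials_Phi four_cosh_square using inner_nu by (simp_all add: power2_eq_square)
qed simp

lemma Phi_isometric_minimal:
  "isometric_minimal_immersion (S2plus \<times> UNIV) TanS2R Phi (\<lambda>z. 4 * (cosh (v z))\<^sup>2)"
  unfolding isometric_minimal_immersion_def
proof (intro conjI allI impI Phi_isometric)
  fix z
  show "Phi z \<in> S2plus \<times> UNIV" using nu_in_S2plus by (simp add: Phi_def)
next
  fix z u
  assume "u \<in> TanS2R (Phi z) \<and> u \<bullet> dx Phi z = 0 \<and> u \<bullet> dy Phi z = 0"
  then have "fst u \<bullet> nu z = 0" by (simp add: TanS2R_def Phi_def)
  moreover have "dx Phi = (\<lambda>z. (nu_x z, 2 * sin (t / 2)))" "dy Phi = (\<lambda>z. (nu_y z, 2 * cos (t / 2)))"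
    by (simp_all add: fun_eq_iff partials_Phi)
  ultimately show "lap Phi z \<bullet> u = 0"
    using lap_nu[of z] partials_nu unfolding lap_def by (cases u) (simp add: inner_commute)
qed

lemma Phi_hopf: "hopf_S2R Phi z = exp (\<i> * complex_of_real t)"
proof -
  have "(\<lambda>w. fst (Phi w)) = nu" by (simp add: fun_eq_iff Phi_def)
  then have "hopf_S2R Phi z = Complex ((nu_x z \<bullet> nu_x z - nu_y z \<bullet> nu_y z) / 4) (- (nu_x z \<bullet> nu_y z) / 2)"
    unfolding hopf_S2R_def dz_def cbil_def by (simp add: dx_nu dy_nu inner_commute)
  then show ?thesis
    unfolding inner_nu by (simp add: complex_eq_iff Re_exp Im_exp)
qed

lemma associated_surface:
  "isometric_minimal_immersion (S2plus \<times> UNIV) TanS2R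
     (\<lambda>z. (nu_plus \<phi> z, 2 * Im (z * exp (\<i> * complex_of_real t / 2)))) (\<lambda>z. 4 * (cosh (v z))\<^sup>2)
   \<and> (\<forall>z. hopf_S2R (\<lambda>z. (nu_plus \<phi> z, 2 * Im (z * exp (\<i> * complex_of_real t / 2)))) z
          = exp (\<i> * complex_of_real t))"
  unfolding Phi_eq using Phi_isometric_minimal Phi_hopf by blast

end

theorem corollary5p5:
  fixes v :: "complex \<Rightarrow> real" and \<phi> :: "real \<Rightarrow> complex \<Rightarrow> real^4"
  assumes v_smooth: "smooth v"
    and v_eq: "\<forall>z. lap v z / 4 + sinh (2 * v z) / 2 = 0"
    and phi_min: "\<forall>t. isometric_minimal_immersion S3 TanS3 (\<phi> t) (\<lambda>z. exp (2 * v z))"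
    and phi_hopf: "\<forall>t z. hopf_S3 (\<phi> t) z = \<i> / 2 * exp (\<i> * complex_of_real t)"
  shows "\<forall>t. isometric_minimal_immersion (S2plus \<times> UNIV) TanS2R
              (\<lambda>z. (nu_plus (\<phi> t) z, 2 * Im (z * exp (\<i> * complex_of_real t / 2))))
              (\<lambda>z. 4 * (cosh (v z))\<^sup>2)
           \<and> (\<forall>z. hopf_S2R (\<lambda>z. (nu_plus (\<phi> t) z, 2 * Im (z * exp (\<i> * complex_of_real t / 2)))) z
                  = exp (\<i> * complex_of_real t))"
proof -
  have "minimal_S3 (\<phi> t) v t" for t
    using v_smooth phi_min phi_hopf by unfold_locales auto
  then show ?thesis
    using minimal_S3.associated_surface by blast
qed

end
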